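(* Let $\varphi$ be an Orlicz $N$-function with Young–Fenchel transform $\psi$. Let $\{X_{k,n},k\ge1,n\ge1\}$ be a double array of $\varphi$-subgaussian random variables, let $g$ be a positive non-decreasing function, set $a_{m,j}=g(\ln(mj))\psi^{-1}(\ln(mj))$, $Y_{m,j}=\max_{1\le k\le m,1\le n\le j}X_{k,n}-a_{m,j}$ and $Y^+_{m,j}=\max(Y_{m,j},0)$. Let $\alpha\in\mathbb R$. Suppose there is a positive-valued function $f$ such that for all $m,j\ge1$, $1\le k\le m$, $1\le n\le j$, $$\frac{g(\ln(mj))}{\tau_\varphi(X_{k,n})}\ge f\left(\frac{mj}{kn}\right)\ge1,$$ and $$\sum_{m=1}^\infty\sum_{j=1}^\infty\sum_{k=1}^m\sum_{n=1}^j(mj)^{-\alpha-f\left(\frac{mj}{kn}\right)}<+\infty.$$ Then $$\sum_{m=1}^\infty\sum_{j=1}^\infty(mj)^{-\alpha}P(Y^+_{m,j}>0)<+\infty.$$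
   Context: An Orlicz $N$-function is a continuous even convex function $\varphi:\mathbb R\to\mathbb R$ with $\varphi(0)=0$, increasing on $(0,\infty)$, with $\varphi(x)/x\to0$ as $x\to0$ and $\varphi(x)/x\to+\infty$ as $x\to+\infty$. The Young–Fenchel transform is $\psi(x)=\sup_{y\in\mathbb R}(xy-\varphi(y))$ (itself an Orlicz $N$-function); $\psi^{-1}$ is the inverse of $\psi$ on $[0,\infty)$. A random variable $X$ is $\varphi$-subgaussian if $EX=0$ and there is a finite $a>0$ with $E\exp(tX)\le\exp(\varphi(at))$ for all $t$; $\tau_\varphi(X)=\inf\{a>0:E\exp(tX)\le\exp(\varphi(at))\ \forall t\}$. *)

theory Defs
  imports "HOL-Probability.Probability"
begin

definition orlicz_N :: "(real \<Rightarrow> real) \<Rightarrow> bool" where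
  "orlicz_N \<phi> \<longleftrightarrow>
     continuous_on UNIV \<phi> \<and> (\<forall>x. \<phi> (- x) = \<phi> x) \<and> convex_on UNIV \<phi> \<and>
     \<phi> 0 = 0 \<and> strict_mono_on {0<..} \<phi> \<and>
     ((\<lambda>x. \<phi> x / x) \<longlongrightarrow> 0) (at 0) \<and>
     filterlim (\<lambda>x. \<phi> x / x) at_top at_top"

definition young_fenchel :: "(real \<Rightarrow> real) \<Rightarrow> real \<Rightarrow> real" where
  "young_fenchel \<phi> x = (SUP y. x * y - \<phi> y)"

definition inv_nonneg :: "(real \<Rightarrow> real) \<Rightarrow> real \<Rightarrow> real" where
  "inv_nonneg \<psi> = the_inv_into {0..} \<psi>"

definition mgf_bounded :: "'a measure \<Rightarrow> (real \<Rightarrow> real) \<Rightarrow> ('a \<Rightarrow> real) \<Rightarrow> real \<Rightarrow> bool" where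
  "mgf_bounded M \<phi> X a \<longleftrightarrow>
     (\<forall>t. integrable M (\<lambda>\<omega>. exp (t * X \<omega>)) \<and>
          (\<integral>\<omega>. exp (t * X \<omega>) \<partial>M) \<le> exp (\<phi> (a * t)))"

definition phi_subgaussian :: "'a measure \<Rightarrow> (real \<Rightarrow> real) \<Rightarrow> ('a \<Rightarrow> real) \<Rightarrow> bool" where
  "phi_subgaussian M \<phi> X \<longleftrightarrow>
     X \<in> borel_measurable M \<and> integrable M X \<and> (\<integral>\<omega>. X \<omega> \<partial>M) = 0 \<and>
     (\<exists>a>0. mgf_bounded M \<phi> X a)"

definition tau_phi :: "'a measure \<Rightarrow> (real \<Rightarrow> real) \<Rightarrow> ('a \<Rightarrow> real) \<Rightarrow> real" where
  "tau_phi M \<phi> X = Inf {a. a > 0 \<and> mgf_bounded M \<phi> X a}"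

end

theory Submission
  imports Defs
begin

text \<open>
  Write \<open>N = m j\<close>, \<open>\<tau> = \<tau>\<^sub>\<phi>(X\<^sub>k\<^sub>n)\<close> and \<open>v = \<psi>\<inverse>(ln N)\<close>. The Chernoff bound,
  optimised over the exponent, gives \<open>P(X\<^sub>k\<^sub>n > c) \<le> exp(-\<psi>(c/\<tau>))\<close>. For
  \<open>c = g(ln N) v\<close> the hypothesis gives \<open>c/\<tau> \<ge> F v\<close> with \<open>F = f(N/(k n)) \<ge> 1\<close>, and
  \<open>\<psi>(F v) \<ge> F \<psi>(v) = F ln N\<close> by convexity of \<open>\<psi>\<close> and \<open>\<psi>(0) = 0\<close>; hence
  \<open>P(X\<^sub>k\<^sub>n > c) \<le> N powr (-F)\<close>. A union bound over \<open>k \<le> m, n \<le> j\<close> then bounds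
  each term of the series in the conclusion by the corresponding term of the
  convergent series in the hypothesis.
\<close>

lemma orlicz_N_nonneg:
  assumes "orlicz_N \<phi>"
  shows "\<phi> x \<ge> 0"
proof -
  have "convex_on UNIV \<phi>" "\<phi> (- x) = \<phi> x" "\<phi> 0 = 0"
    using assms unfolding orlicz_N_def by auto
  moreover from this(1) have "\<phi> ((1 - 1/2) *\<^sub>R x + (1/2) *\<^sub>R (- x)) \<le> (1 - 1/2) * \<phi> x + (1/2) * \<phi> (- x)"
    by (rule convex_onD) auto
  ultimately show ?thesis by simp
qed

lemma orlicz_N_scale_le:
  assumes "orlicz_N \<phi>" "0 \<le> l" "l \<le> 1"
  shows "\<phi> (l * z) \<le> \<phi> z"
proof -
  have "convex_on UNIV \<phi>" "\<phi> 0 = 0"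
    using assms unfolding orlicz_N_def by auto
  then have "\<phi> ((1 - l) *\<^sub>R 0 + l *\<^sub>R z) \<le> l * \<phi> z"
    using convex_onD[of UNIV \<phi> l 0 z] assms(2,3) by simp
  also have "\<dots> \<le> \<phi> z"
    using orlicz_N_nonneg[OF assms(1), of z] assms(2,3) by (simp add: mult_left_le_one_le)
  finally show ?thesis by simp
qed

subsection \<open>The Young--Fenchel transform\<close>

lemma young_fenchel_bdd_above:
  assumes "orlicz_N \<phi>"
  shows "bdd_above (range (\<lambda>y. x * y - \<phi> y))"
proof -
  have lim: "filterlim (\<lambda>y. \<phi> y / y) at_top at_top" and even: "\<And>y. \<phi> (- y) = \<phi> y"
    using assms unfolding orlicz_N_def by auto
  obtain Y where Y: "\<And>y. y \<ge> Y \<Longrightarrow> \<phi> y / y \<ge> \<bar>x\<bar>"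
    using lim by (auto simp: filterlim_at_top eventually_at_top_linorder)
  define Z where "Z = max Y 1"
  have "x * y - \<phi> y \<le> \<bar>x\<bar> * Z" for y
  proof (cases "\<bar>y\<bar> \<ge> Z")
    case True
    then have "\<bar>y\<bar> > 0" "\<phi> \<bar>y\<bar> / \<bar>y\<bar> \<ge> \<bar>x\<bar>"
      unfolding Z_def by (auto intro: Y)
    then have "\<phi> \<bar>y\<bar> \<ge> \<bar>x\<bar> * \<bar>y\<bar>" by (simp add: field_simps)
    moreover have "\<phi> \<bar>y\<bar> = \<phi> y" using even[of y] by (cases "y \<ge> 0") auto
    moreover have "x * y \<le> \<bar>x\<bar> * \<bar>y\<bar>" by (metis abs_ge_self abs_mult)
    ultimately show ?thesis unfolding Z_def by (smt (verit) mult_nonneg_nonneg abs_ge_zero)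
  next
    case False
    have "x * y \<le> \<bar>x\<bar> * \<bar>y\<bar>" by (metis abs_ge_self abs_mult)
    also have "\<dots> \<le> \<bar>x\<bar> * Z" using False by (intro mult_left_mono) auto
    finally show ?thesis using orlicz_N_nonneg[OF assms, of y] by simp
  qed
  then show ?thesis by (intro bdd_aboveI2)
qed

lemma young_fenchel_ge:
  assumes "orlicz_N \<phi>"
  shows "x * y - \<phi> y \<le> young_fenchel \<phi> x"
  unfolding young_fenchel_def by (rule cSUP_upper[OF _ young_fenchel_bdd_above[OF assms]]) auto

lemma young_fenchel_le:
  assumes "\<And>y. x * y - \<phi> y \<le> B"
  shows "young_fenchel \<phi> x \<le> B"
  unfolding young_fenchel_def by (rule cSUP_least) (use assms in auto)

lemma young_fenchel_le_nonneg:
  assumes "orlicz_N \<phi>" "x \<ge> 0" "B \<ge> 0" "\<And>y. y \<ge> 0 \<Longrightarrow> x * y - \<phi> y \<le> B"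
  shows "young_fenchel \<phi> x \<le> B"
proof (rule young_fenchel_le)
  fix y
  show "x * y - \<phi> y \<le> B"
  proof (cases "y \<ge> 0")
    case False
    then have "x * y \<le> 0" using assms(2) by (simp add: mult_nonneg_nonpos)
    then show ?thesis using orlicz_N_nonneg[OF assms(1), of y] assms(3) by linarith
  qed (use assms(4) in simp)
qed

lemma young_fenchel_zero:
  assumes "orlicz_N \<phi>"
  shows "young_fenchel \<phi> 0 = 0"
proof (rule antisym)
  show "young_fenchel \<phi> 0 \<le> 0"
    by (rule young_fenchel_le) (use orlicz_N_nonneg[OF assms] in auto)
  show "young_fenchel \<phi> 0 \<ge> 0"
    using young_fenchel_ge[OF assms, of 0 0] assms by (simp add: orlicz_N_def)
qed

lemma young_fenchel_pos:
  assumes "orlicz_N \<phi>" "x > 0"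
  shows "young_fenchel \<phi> x > 0"
proof -
  have "((\<lambda>y. \<phi> y / y) \<longlongrightarrow> 0) (at 0)" using assms(1) unfolding orlicz_N_def by auto
  from tendstoD[OF this assms(2)] obtain d where
    d: "d > 0" "\<And>y. y \<noteq> 0 \<Longrightarrow> dist y 0 < d \<Longrightarrow> dist (\<phi> y / y) 0 < x"
    by (auto simp: eventually_at)
  have "dist (\<phi> (d/2) / (d/2)) 0 < x" using d by (intro d(2)) auto
  then have "\<phi> (d/2) / (d/2) < x" by (simp only: dist_real_def diff_0_right abs_less_iff)
  then have "\<phi> (d/2) < x * (d/2)" using d(1) by (simp add: field_simps)
  then show ?thesis using young_fenchel_ge[OF assms(1), of x "d/2"] by simp
qed

lemma young_fenchel_scale_le:
  assumes "orlicz_N \<phi>" "0 \<le> l" "l \<le> 1"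
  shows "young_fenchel \<phi> (l * x) \<le> l * young_fenchel \<phi> x"
proof (rule young_fenchel_le)
  fix y
  have "l * x * y - \<phi> y \<le> l * (x * y - \<phi> y)"
    using orlicz_N_nonneg[OF assms(1), of y] assms(2,3) by (simp add: algebra_simps mult_left_le_one_le)
  also have "\<dots> \<le> l * young_fenchel \<phi> x"
    using young_fenchel_ge[OF assms(1)] assms(2) by (simp add: mult_left_mono)
  finally show "l * x * y - \<phi> y \<le> l * young_fenchel \<phi> x" .
qed

lemma young_fenchel_scale_ge:
  assumes "orlicz_N \<phi>" "c \<ge> 1"
  shows "c * young_fenchel \<phi> v \<le> young_fenchel \<phi> (c * v)"
proof -
  have "young_fenchel \<phi> ((1 / c) * (c * v)) \<le> (1 / c) * young_fenchel \<phi> (c * v)"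
    using assms by (intro young_fenchel_scale_le) auto
  then show ?thesis using assms(2) by (simp add: field_simps)
qed

lemma young_fenchel_strict_mono:
  assumes "orlicz_N \<phi>"
  shows "strict_mono_on {0..} (young_fenchel \<phi>)"
proof (rule strict_mono_onI)
  fix x x' :: real assume "x \<in> {0..}" "x' \<in> {0..}" "x < x'"
  then have x: "0 \<le> x" "x' > 0" by auto
  have "young_fenchel \<phi> x = young_fenchel \<phi> ((x / x') * x')" using x by simp
  also have "\<dots> \<le> (x / x') * young_fenchel \<phi> x'"
    using x \<open>x < x'\<close> by (intro young_fenchel_scale_le[OF assms]) auto
  also have "\<dots> < young_fenchel \<phi> x'"
    using young_fenchel_pos[OF assms x(2)] x \<open>x < x'\<close> by (simp add: field_simps)
  finally show "young_fenchel \<phi> x < young_fenchel \<phi> x'" .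
qed

lemma young_fenchel_mono:
  assumes "orlicz_N \<phi>" "0 \<le> x" "x \<le> x'"
  shows "young_fenchel \<phi> x \<le> young_fenchel \<phi> x'"
  using strict_mono_on_leD[OF young_fenchel_strict_mono[OF assms(1)], of x x'] assms(2,3) by simp

lemma convex_on_young_fenchel:
  assumes "orlicz_N \<phi>"
  shows "convex_on UNIV (young_fenchel \<phi>)"
proof (rule convex_onI)
  fix t x y :: real assume t: "0 < t" "t < 1"
  show "young_fenchel \<phi> ((1 - t) *\<^sub>R x + t *\<^sub>R y) \<le> (1 - t) * young_fenchel \<phi> x + t * young_fenchel \<phi> y"
  proof (rule young_fenchel_le)
    fix z
    have "((1 - t) *\<^sub>R x + t *\<^sub>R y) * z - \<phi> z = (1 - t) * (x * z - \<phi> z) + t * (y * z - \<phi> z)"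
      by (simp add: algebra_simps)
    also have "\<dots> \<le> (1 - t) * young_fenchel \<phi> x + t * young_fenchel \<phi> y"
      using t young_fenchel_ge[OF assms] by (intro add_mono mult_left_mono) auto
    finally show "((1 - t) *\<^sub>R x + t *\<^sub>R y) * z - \<phi> z \<le> (1 - t) * young_fenchel \<phi> x + t * young_fenchel \<phi> y" .
  qed
qed simp

lemma young_fenchel_inv_nonneg:
  assumes "orlicz_N \<phi>" "L \<ge> 0"
  shows "inv_nonneg (young_fenchel \<phi>) L \<ge> 0"
    and "young_fenchel \<phi> (inv_nonneg (young_fenchel \<phi>) L) = L"
proof -
  let ?b = "L + \<phi> 1"
  have b: "?b \<ge> 0" using assms orlicz_N_nonneg[OF assms(1)] by (simp add: add_nonneg_nonneg)
  have "young_fenchel \<phi> 0 \<le> L" "L \<le> young_fenchel \<phi> ?b"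
    using young_fenchel_zero[OF assms(1)] young_fenchel_ge[OF assms(1), of ?b 1] assms(2) by auto
  moreover have "continuous_on {0..?b} (young_fenchel \<phi>)"
    using convex_on_continuous[OF open_UNIV convex_on_young_fenchel[OF assms(1)]]
    by (rule continuous_on_subset) simp
  ultimately obtain v where v: "0 \<le> v" "young_fenchel \<phi> v = L"
    using IVT'[of "young_fenchel \<phi>" 0 L ?b] b by auto
  have "inv_nonneg (young_fenchel \<phi>) L = v"
    unfolding inv_nonneg_def
    using strict_mono_on_imp_inj_on[OF young_fenchel_strict_mono[OF assms(1)]] v
    by (intro the_inv_into_f_eq) auto
  with v show "inv_nonneg (young_fenchel \<phi>) L \<ge> 0"
    and "young_fenchel \<phi> (inv_nonneg (young_fenchel \<phi>) L) = L" by simp_all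
qed

subsection \<open>Tails of \<open>\<phi>\<close>-subgaussian random variables\<close>

lemma mgf_bounded_mono:
  assumes "orlicz_N \<phi>" "mgf_bounded M \<phi> X a" "0 < a" "a \<le> a'"
  shows "mgf_bounded M \<phi> X a'"
  unfolding mgf_bounded_def
proof
  fix t
  have "\<phi> (a * t) = \<phi> ((a / a') * (a' * t))" using assms(3,4) by simp
  also have "\<dots> \<le> \<phi> (a' * t)" using assms by (intro orlicz_N_scale_le) auto
  finally show "integrable M (\<lambda>\<omega>. exp (t * X \<omega>)) \<and> (\<integral>\<omega>. exp (t * X \<omega>) \<partial>M) \<le> exp (\<phi> (a' * t))"
    using assms(2) unfolding mgf_bounded_def by (meson exp_le_cancel_iff order_trans)
qed

text \<open>By continuity of \<open>\<phi>\<close>, the infimum defining \<open>\<tau>\<^sub>\<phi>\<close> is attained.\<close>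

lemma mgf_bounded_tau_phi:
  assumes "orlicz_N \<phi>" "phi_subgaussian M \<phi> X"
  shows "mgf_bounded M \<phi> X (tau_phi M \<phi> X)"
proof -
  define \<tau> where "\<tau> = tau_phi M \<phi> X"
  define S where "S = {a. a > 0 \<and> mgf_bounded M \<phi> X a}"
  have S: "S \<noteq> {}" "bdd_below S" "\<tau> = Inf S"
    using assms(2) unfolding S_def \<tau>_def tau_phi_def phi_subgaussian_def
    by (auto intro!: bdd_belowI[of _ 0])
  have above: "mgf_bounded M \<phi> X a" if "a > \<tau>" for a
  proof -
    obtain b where "b \<in> S" "b < a" using cInf_less_iff[OF S(1,2)] S(3) \<open>a > \<tau>\<close> by auto
    then have "mgf_bounded M \<phi> X b" "0 < b" "b \<le> a" unfolding S_def by auto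
    then show ?thesis by (rule mgf_bounded_mono[OF assms(1)])
  qed
  show ?thesis
    unfolding mgf_bounded_def \<tau>_def[symmetric]
  proof
    fix t
    have "continuous_on UNIV \<phi>" using assms(1) unfolding orlicz_N_def by auto
    then have "((\<lambda>a. exp (\<phi> (a * t))) \<longlongrightarrow> exp (\<phi> (\<tau> * t))) (at_right \<tau>)"
      by (intro tendsto_intros isCont_tendsto_compose[of _ \<phi>])
        (auto simp: continuous_on_eq_continuous_at)
    moreover have "eventually (\<lambda>a. (\<integral>\<omega>. exp (t * X \<omega>) \<partial>M) \<le> exp (\<phi> (a * t))) (at_right \<tau>)"
      using eventually_at_right_less[of \<tau>]
      by (rule eventually_mono) (use above in \<open>auto simp: mgf_bounded_def\<close>)
    ultimately have "(\<integral>\<omega>. exp (t * X \<omega>) \<partial>M) \<le> exp (\<phi> (\<tau> * t))"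
      by (intro tendsto_le[OF _ _ tendsto_const]) simp_all
    then show "integrable M (\<lambda>\<omega>. exp (t * X \<omega>)) \<and> (\<integral>\<omega>. exp (t * X \<omega>) \<partial>M) \<le> exp (\<phi> (\<tau> * t))"
      using above[of "\<tau> + 1"] unfolding mgf_bounded_def by simp
  qed
qed

lemma mgf_bounded_chernoff:
  assumes "finite_measure M" "X \<in> borel_measurable M" "mgf_bounded M \<phi> X a" "t \<ge> 0"
  shows "measure M {\<omega> \<in> space M. X \<omega> > c} \<le> exp (\<phi> (a * t) - t * c)"
proof -
  interpret finite_measure M by (rule assms(1))
  have [measurable]: "X \<in> borel_measurable M" by (rule assms(2))
  have mgf: "integrable M (\<lambda>\<omega>. exp (t * X \<omega>))" "(\<integral>\<omega>. exp (t * X \<omega>) \<partial>M) \<le> exp (\<phi> (a * t))"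
    using assms(3) unfolding mgf_bounded_def by auto
  have "measure M {\<omega> \<in> space M. X \<omega> > c} \<le> measure M {\<omega> \<in> space M. exp (t * X \<omega>) \<ge> exp (t * c)}"
    by (rule finite_measure_mono) (use assms(4) in \<open>auto intro: mult_left_mono\<close>)
  also have "\<dots> \<le> (\<integral>\<omega>. exp (t * X \<omega>) \<partial>M) / exp (t * c)"
    by (rule integral_Markov_inequality_measure[where A = "space M"]) (use mgf in auto)
  also have "\<dots> \<le> exp (\<phi> (a * t)) / exp (t * c)"
    using mgf by (intro divide_right_mono) auto
  finally show ?thesis by (simp add: exp_diff)
qed

lemma phi_subgaussian_tail_bound:
  assumes "prob_space M" "orlicz_N \<phi>" "phi_subgaussian M \<phi> X"
    and "tau_phi M \<phi> X > 0" "c \<ge> 0"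
  shows "measure M {\<omega> \<in> space M. X \<omega> > c} \<le> exp (- young_fenchel \<phi> (c / tau_phi M \<phi> X))"
proof -
  interpret prob_space M by (rule assms(1))
  define \<tau> where "\<tau> = tau_phi M \<phi> X"
  define p where "p = measure M {\<omega> \<in> space M. X \<omega> > c}"
  have \<tau>: "\<tau> > 0" using assms(4) unfolding \<tau>_def .
  have X: "X \<in> borel_measurable M" using assms(3) unfolding phi_subgaussian_def by simp
  have chernoff: "p \<le> exp (\<phi> y - y * (c / \<tau>))" if "y \<ge> 0" for y
  proof -
    have "p \<le> exp (\<phi> (\<tau> * (y / \<tau>)) - y / \<tau> * c)"
      unfolding p_def
      by (rule mgf_bounded_chernoff[OF finite_measure_axioms X mgf_bounded_tau_phi[OF assms(2,3), folded \<tau>_def]])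
        (use that \<tau> in simp)
    then show ?thesis using \<tau> by simp
  qed
  show ?thesis
  proof (cases "p = 0")
    case False
    then have p: "0 < p" "p \<le> 1" unfolding p_def using measure_nonneg[of M] by (simp_all add: order_less_le)
    have "young_fenchel \<phi> (c / \<tau>) \<le> - ln p"
    proof (rule young_fenchel_le_nonneg[OF assms(2)])
      fix y :: real assume "y \<ge> 0"
      then have "ln p \<le> ln (exp (\<phi> y - y * (c / \<tau>)))"
        using chernoff p(1) by (subst ln_le_cancel_iff) auto
      then show "c / \<tau> * y - \<phi> y \<le> - ln p" by (simp add: algebra_simps)
    next
      show "0 \<le> c / \<tau>" using assms(5) \<tau> by simp
      show "0 \<le> - ln p" using p by simp
    qed
    then have "exp (ln p) \<le> exp (- young_fenchel \<phi> (c / \<tau>))" by simp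
    then show ?thesis using p(1) unfolding p_def \<tau>_def by simp
  next
    case True
    then show ?thesis unfolding p_def by simp
  qed
qed

lemma phi_subgaussian_tail_inv_young_fenchel:
  assumes "prob_space M" "orlicz_N \<phi>" "phi_subgaussian M \<phi> X"
    and "b > 0" "1 \<le> F" "F \<le> b / tau_phi M \<phi> X" "L \<ge> 0"
  shows "measure M {\<omega> \<in> space M. X \<omega> > b * inv_nonneg (young_fenchel \<phi>) L} \<le> exp (- (F * L))"
proof -
  define \<tau> where "\<tau> = tau_phi M \<phi> X"
  define v where "v = inv_nonneg (young_fenchel \<phi>) L"
  have v: "v \<ge> 0" "young_fenchel \<phi> v = L"
    using young_fenchel_inv_nonneg[OF assms(2,7)] unfolding v_def by auto
  have F: "1 \<le> F" "F \<le> b / \<tau>" using assms(5,6) unfolding \<tau>_def by auto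
  then have \<tau>: "\<tau> > 0" using assms(4) by (smt (verit) divide_nonneg_nonpos)
  have "measure M {\<omega> \<in> space M. X \<omega> > b * v} \<le> exp (- young_fenchel \<phi> (b * v / \<tau>))"
    using phi_subgaussian_tail_bound[OF assms(1-3)] \<tau> assms(4) v(1) unfolding \<tau>_def by simp
  also have "\<dots> \<le> exp (- (F * L))"
  proof -
    have "F * L \<le> young_fenchel \<phi> (F * v)"
      using young_fenchel_scale_ge[OF assms(2) F(1), of v] v(2) by simp
    also have "\<dots> \<le> young_fenchel \<phi> (b / \<tau> * v)"
      using F v(1) by (intro young_fenchel_mono[OF assms(2)] mult_right_mono) simp_all
    finally show ?thesis by simp
  qed
  finally show ?thesis unfolding v_def .
qed

subsection \<open>The union bound over the array\<close>

lemma measure_Max_gt_le_sum: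
  fixes Y :: "'i \<Rightarrow> 'a \<Rightarrow> real"
  assumes "finite_measure M" "finite I" "I \<noteq> {}" "\<And>p. p \<in> I \<Longrightarrow> Y p \<in> borel_measurable M"
  shows "measure M {\<omega> \<in> space M. c < Max ((\<lambda>p. Y p \<omega>) ` I)}
    \<le> (\<Sum>p\<in>I. measure M {\<omega> \<in> space M. c < Y p \<omega>})"
proof -
  interpret finite_measure M by (rule assms(1))
  have sets: "(\<lambda>p. {\<omega> \<in> space M. c < Y p \<omega>}) ` I \<subseteq> sets M"
  proof (rule image_subsetI)
    fix p assume "p \<in> I"
    then have [measurable]: "Y p \<in> borel_measurable M" by (rule assms(4))
    show "{\<omega> \<in> space M. c < Y p \<omega>} \<in> sets M" by measurable
  qed
  have "measure M {\<omega> \<in> space M. c < Max ((\<lambda>p. Y p \<omega>) ` I)}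
      \<le> measure M (\<Union>p\<in>I. {\<omega> \<in> space M. c < Y p \<omega>})"
  proof (rule finite_measure_mono)
    show "{\<omega> \<in> space M. c < Max ((\<lambda>p. Y p \<omega>) ` I)} \<subseteq> (\<Union>p\<in>I. {\<omega> \<in> space M. c < Y p \<omega>})"
    proof
      fix \<omega> assume \<omega>: "\<omega> \<in> {\<omega> \<in> space M. c < Max ((\<lambda>p. Y p \<omega>) ` I)}"
      then obtain p where "p \<in> I" "c < Y p \<omega>"
        using Max_gr_iff[of "(\<lambda>p. Y p \<omega>) ` I" c] assms(2,3) by auto
      with \<omega> show "\<omega> \<in> (\<Union>p\<in>I. {\<omega> \<in> space M. c < Y p \<omega>})" by blast
    qed
    show "(\<Union>p\<in>I. {\<omega> \<in> space M. c < Y p \<omega>}) \<in> sets M"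
      using sets assms(2) by blast
  qed
  also have "\<dots> \<le> (\<Sum>p\<in>I. measure M {\<omega> \<in> space M. c < Y p \<omega>})"
    by (rule finite_measure_subadditive_finite[OF assms(2) sets])
  finally show ?thesis .
qed

lemma max_exceedance_prob_le:
  fixes X :: "nat \<Rightarrow> nat \<Rightarrow> 'a \<Rightarrow> real"
  assumes "prob_space M" "orlicz_N \<phi>" "m \<ge> 1" "j \<ge> 1"
    and "\<And>k n. k \<in> {1..m} \<Longrightarrow> n \<in> {1..j} \<Longrightarrow> phi_subgaussian M \<phi> (X k n)"
    and "\<And>k n. k \<in> {1..m} \<Longrightarrow> n \<in> {1..j} \<Longrightarrow> 1 \<le> F k n \<and> F k n \<le> b / tau_phi M \<phi> (X k n)"
    and "b > 0" "L \<ge> 0"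
  shows "measure M {\<omega> \<in> space M.
           max (Max {X k n \<omega> | k n. k \<in> {1..m} \<and> n \<in> {1..j}} - b * inv_nonneg (young_fenchel \<phi>) L) 0 > 0}
    \<le> (\<Sum>k=1..m. \<Sum>n=1..j. exp (- (F k n * L)))"
proof -
  interpret prob_space M by (rule assms(1))
  define c where "c = b * inv_nonneg (young_fenchel \<phi>) L"
  define I where "I = {1..m} \<times> {1..j}"
  define Y where "Y = (\<lambda>(k, n). X k n)"
  have I: "finite I" "I \<noteq> {}" using assms(3,4) unfolding I_def by auto
  have Y: "Y p \<in> borel_measurable M" if "p \<in> I" for p
    using assms(5) that unfolding I_def Y_def phi_subgaussian_def by auto
  have "{X k n \<omega> | k n. k \<in> {1..m} \<and> n \<in> {1..j}} = (\<lambda>p. Y p \<omega>) ` I" for \<omega>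
    unfolding I_def Y_def by force
  then have "measure M {\<omega> \<in> space M.
           max (Max {X k n \<omega> | k n. k \<in> {1..m} \<and> n \<in> {1..j}} - c) 0 > 0}
      = measure M {\<omega> \<in> space M. c < Max ((\<lambda>p. Y p \<omega>) ` I)}"
    by (simp add: less_max_iff_disj)
  also have "\<dots> \<le> (\<Sum>p\<in>I. measure M {\<omega> \<in> space M. c < Y p \<omega>})"
    by (rule measure_Max_gt_le_sum[OF finite_measure_axioms I Y])
  also have "\<dots> \<le> (\<Sum>(k, n)\<in>I. exp (- (F k n * L)))"
  proof (rule sum_mono)
    fix p assume "p \<in> I"
    then obtain k n where "p = (k, n)" "k \<in> {1..m}" "n \<in> {1..j}" unfolding I_def by blast
    then show "measure M {\<omega> \<in> space M. c < Y p \<omega>} \<le> (\<lambda>(k, n). exp (- (F k n * L))) p"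
      using phi_subgaussian_tail_inv_young_fenchel[OF assms(1,2,5) assms(7) _ _ assms(8)] assms(6)
      unfolding Y_def c_def by simp
  qed
  finally show ?thesis
    unfolding c_def I_def by (simp add: sum.cartesian_product)
qed

lemma weighted_max_exceedance_le:
  fixes X :: "nat \<Rightarrow> nat \<Rightarrow> 'a \<Rightarrow> real"
  assumes "prob_space M" "orlicz_N \<phi>" "m \<ge> 1" "j \<ge> 1"
    and "\<And>k n. k \<in> {1..m} \<Longrightarrow> n \<in> {1..j} \<Longrightarrow> phi_subgaussian M \<phi> (X k n)"
    and "g (ln (real (m * j))) > 0"
    and "\<And>k n. k \<in> {1..m} \<Longrightarrow> n \<in> {1..j} \<Longrightarrow>
           1 \<le> f (real (m * j) / real (k * n))
         \<and> f (real (m * j) / real (k * n)) \<le> g (ln (real (m * j))) / tau_phi M \<phi> (X k n)"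
  shows "real (m * j) powr (- \<alpha>) *
           measure M {\<omega> \<in> space M.
             max (Max {X k n \<omega> | k n. k \<in> {1..m} \<and> n \<in> {1..j}}
                  - g (ln (real (m * j))) * inv_nonneg (young_fenchel \<phi>) (ln (real (m * j)))) 0 > 0}
    \<le> (\<Sum>k=1..m. \<Sum>n=1..j. real (m * j) powr (- \<alpha> - f (real (m * j) / real (k * n))))"
proof -
  define N where "N = real (m * j)"
  have "1 \<le> m * j" using mult_le_mono[OF assms(3,4)] by simp
  then have N: "N \<ge> 1" unfolding N_def by (metis of_nat_1 of_nat_le_iff)
  have "measure M {\<omega> \<in> space M.
          max (Max {X k n \<omega> | k n. k \<in> {1..m} \<and> n \<in> {1..j}}
               - g (ln N) * inv_nonneg (young_fenchel \<phi>) (ln N)) 0 > 0}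
      \<le> (\<Sum>k=1..m. \<Sum>n=1..j. exp (- (f (N / real (k * n)) * ln N)))"
    using assms(6,7) N unfolding N_def
    by (intro max_exceedance_prob_le[OF assms(1-5)]) simp_all
  also have "\<dots> = (\<Sum>k=1..m. \<Sum>n=1..j. N powr (- f (N / real (k * n))))"
    using N by (simp add: powr_def)
  finally have "N powr (- \<alpha>) * measure M {\<omega> \<in> space M.
          max (Max {X k n \<omega> | k n. k \<in> {1..m} \<and> n \<in> {1..j}}
               - g (ln N) * inv_nonneg (young_fenchel \<phi>) (ln N)) 0 > 0}
      \<le> N powr (- \<alpha>) * (\<Sum>k=1..m. \<Sum>n=1..j. N powr (- f (N / real (k * n))))"
    by (rule mult_left_mono) simp
  also have "\<dots> = (\<Sum>k=1..m. \<Sum>n=1..j. N powr (- \<alpha> - f (N / real (k * n))))"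
    unfolding sum_distrib_left powr_add[symmetric] by (simp only: diff_conv_add_uminus)
  finally show ?thesis unfolding N_def .
qed

theorem theorem4:
  fixes M :: "'a measure" and \<phi> :: "real \<Rightarrow> real"
    and X :: "nat \<Rightarrow> nat \<Rightarrow> 'a \<Rightarrow> real"
    and g f :: "real \<Rightarrow> real" and \<alpha> :: real
  assumes "prob_space M"
    and "orlicz_N \<phi>"
    and "\<And>k n. k \<ge> 1 \<Longrightarrow> n \<ge> 1 \<Longrightarrow> phi_subgaussian M \<phi> (X k n)"
    and "\<And>x. g x > 0" and "mono g"
    and "\<And>x. f x > 0"
    and "\<And>m j k n. 1 \<le> k \<Longrightarrow> k \<le> m \<Longrightarrow> 1 \<le> n \<Longrightarrow> n \<le> j \<Longrightarrow>
           g (ln (real (m * j))) / tau_phi M \<phi> (X k n) \<ge> f (real (m * j) / real (k * n))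
         \<and> f (real (m * j) / real (k * n)) \<ge> 1"
    and "(\<Sum>m. \<Sum>j. ennreal (\<Sum>k=1..Suc m. \<Sum>n=1..Suc j.
            real (Suc m * Suc j) powr (- \<alpha> - f (real (Suc m * Suc j) / real (k * n))))) < \<top>"
  shows "(\<Sum>m. \<Sum>j. ennreal (real (Suc m * Suc j) powr (- \<alpha>) *
            measure M {\<omega> \<in> space M.
              max (Max {X k n \<omega> | k n. k \<in> {1..Suc m} \<and> n \<in> {1..Suc j}}
                   - g (ln (real (Suc m * Suc j))) *
                     inv_nonneg (young_fenchel \<phi>) (ln (real (Suc m * Suc j)))) 0 > 0})) < \<top>"
proof -
  have "ennreal (real (Suc m * Suc j) powr (- \<alpha>) *
            measure M {\<omega> \<in> space M.
              max (Max {X k n \<omega> | k n. k \<in> {1..Suc m} \<and> n \<in> {1..Suc j}}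
                   - g (ln (real (Suc m * Suc j))) *
                     inv_nonneg (young_fenchel \<phi>) (ln (real (Suc m * Suc j)))) 0 > 0})
     \<le> ennreal (\<Sum>k=1..Suc m. \<Sum>n=1..Suc j.
            real (Suc m * Suc j) powr (- \<alpha> - f (real (Suc m * Suc j) / real (k * n))))" for m j
    using assms(3,4) assms(7)[of _ "Suc m" _ "Suc j"]
    by (intro ennreal_leI weighted_max_exceedance_le[OF assms(1,2)]) auto
  then show ?thesis
    by (intro le_less_trans[OF _ assms(8)] suminf_le summableI allI)
qed

end
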